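(* Let $G$ be a unimodular amenable locally compact group with Haar measure $m$, let $(A_i)_{i\in\mathbb I}$ be a strong Følner net in $G$, and let $\nu$ be an upper translation bounded measure on $G$. Then for all $K,L\in\mathcal K$ the following limits exist and \[ \sup_{K,L\in \mathcal K}\lim_{i\in \mathbb I} \sup_{s\in G} \frac{\nu(L \delta^K A_is)}{m(A_i)} = \sup_{K,L\in \mathcal K}\lim_{i\in \mathbb I} \sup_{s\in G}\frac{\nu(L \partial_K A_is)}{m(A_i)} = \sup_{K,L\in \mathcal K}\lim_{i\in \mathbb I} \sup_{s\in G}\frac{\nu(L \partial^K A_is)}{m(A_i)} = 0 . \]
   Context: A measure is a positive Borel measure; $\nu$ is upper translation bounded if $\sup_{x\in G}\nu(Bx)<\infty$ for some compact symmetric unit neighborhood $B$. $\mathcal K$: nonempty compact subsets of $G$; $\mathcal K_p$: those of positive Haar measure. Nets are indexed by a directed partially ordered set $(\mathbb I,\prec)$. For $K,A\subseteq G$ with $A^c=G\setminus A$: $\delta^KA=KA\,\triangle\,A$; $\partial^KA=(KA\cap \overline{A^c})\cup (K^{-1} \overline{A^c}\cap A)$; $\partial_K A=K^{-1}A\cap K^{-1}A^c$. A strong Følner net is a net $(A_i)$ in $\mathcal K_p$ with $\lim_i m(\partial_KA_i)/m(A_i)=0$ for every $K\in\mathcal K$. $G$ is amenable if it admits a left-invariant mean on $L^\infty(G)$. *)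

theory Defs
  imports "HOL-Analysis.Analysis"
begin

text \<open>The group G is a type of class topological_group_add (a possibly
non-commutative topological group, written additively: the paper's product xy
is x + y, the inverse x^-1 is -x, the unit is 0) which is moreover Hausdorff
(t2_space) and locally compact.\<close>

definition set_prod :: "'g::plus set \<Rightarrow> 'g set \<Rightarrow> 'g set" where
  "set_prod K A = {k + a | k a. k \<in> K \<and> a \<in> A}"

definition rtrans :: "'g::plus set \<Rightarrow> 'g \<Rightarrow> 'g set" where
  "rtrans A s = (\<lambda>a. a + s) ` A"

definition set_inv :: "'g::uminus set \<Rightarrow> 'g set" where
  "set_inv K = uminus ` K"

definition bd_delta :: "'g::plus set \<Rightarrow> 'g set \<Rightarrow> 'g set" where
  "bd_delta K A = (set_prod K A - A) \<union> (A - set_prod K A)"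

definition bd_upper :: "'g::{plus,uminus,topological_space} set \<Rightarrow> 'g set \<Rightarrow> 'g set" where
  "bd_upper K A = (set_prod K A \<inter> closure (- A)) \<union> (set_prod (set_inv K) (closure (- A)) \<inter> A)"

definition bd_lower :: "'g::{plus,uminus} set \<Rightarrow> 'g set \<Rightarrow> 'g set" where
  "bd_lower K A = set_prod (set_inv K) A \<inter> set_prod (set_inv K) (- A)"

text \<open>Outer measure, used to evaluate a Borel measure on arbitrary sets.\<close>
definition outer_meas :: "'a measure \<Rightarrow> 'a set \<Rightarrow> ennreal" where
  "outer_meas \<nu> E = (INF U \<in> {U. U \<in> sets \<nu> \<and> E \<subseteq> U}. emeasure \<nu> U)"

definition haar_measure :: "'g::{topological_group_add} measure \<Rightarrow> bool" where
  "haar_measure m \<longleftrightarrow>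
     sets m = sets borel \<and>
     (\<forall>x A. A \<in> sets borel \<longrightarrow> emeasure m ((\<lambda>a. x + a) ` A) = emeasure m A) \<and>
     (\<forall>K. compact K \<longrightarrow> emeasure m K < \<infinity>) \<and>
     (\<forall>U. open U \<and> U \<noteq> {} \<longrightarrow> emeasure m U > 0) \<and>
     (\<forall>A \<in> sets borel. emeasure m A = (INF U \<in> {U. open U \<and> A \<subseteq> U}. emeasure m U)) \<and>
     (\<forall>U. open U \<longrightarrow> emeasure m U = (SUP K \<in> {K. compact K \<and> K \<subseteq> U}. emeasure m K))"

definition unimodular :: "'g::{topological_group_add} measure \<Rightarrow> bool" where
  "unimodular m \<longleftrightarrow>
     (\<forall>x A. A \<in> sets borel \<longrightarrow> emeasure m ((\<lambda>a. a + x) ` A) = emeasure m A)"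

definition Linf :: "'g measure \<Rightarrow> ('g \<Rightarrow> real) \<Rightarrow> bool" where
  "Linf m f \<longleftrightarrow> f \<in> borel_measurable m \<and> (\<exists>C. AE y in m. \<bar>f y\<bar> \<le> C)"

definition left_inv_mean :: "'g::{topological_group_add} measure \<Rightarrow> (('g \<Rightarrow> real) \<Rightarrow> real) \<Rightarrow> bool" where
  "left_inv_mean m M \<longleftrightarrow>
     (\<forall>f g a b. Linf m f \<and> Linf m g \<longrightarrow> M (\<lambda>y. a * f y + b * g y) = a * M f + b * M g) \<and>
     (\<forall>f g. Linf m f \<and> Linf m g \<and> (AE y in m. f y = g y) \<longrightarrow> M f = M g) \<and>
     (\<forall>f. Linf m f \<and> (AE y in m. f y \<ge> 0) \<longrightarrow> M f \<ge> 0) \<and>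
     M (\<lambda>y. 1) = 1 \<and>
     (\<forall>f x. Linf m f \<longrightarrow> M (\<lambda>y. f (x + y)) = M f)"

definition amenable :: "'g::{topological_group_add} measure \<Rightarrow> bool" where
  "amenable m \<longleftrightarrow> (\<exists>M. left_inv_mean m M)"

definition strong_foelner :: "'g::{topological_group_add} measure \<Rightarrow> ('i::order \<Rightarrow> 'g set) \<Rightarrow> bool" where
  "strong_foelner m A \<longleftrightarrow>
     (\<forall>i. compact (A i) \<and> A i \<noteq> {} \<and> emeasure m (A i) > 0) \<and>
     (\<forall>K. compact K \<and> K \<noteq> {} \<longrightarrow>
        ((\<lambda>i. measure m (bd_lower K (A i)) / measure m (A i)) \<longlongrightarrow> 0) at_top)"

definition upper_translation_bounded :: "'g::{topological_group_add} measure \<Rightarrow> bool" where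
  "upper_translation_bounded \<nu> \<longleftrightarrow>
     sets \<nu> = sets borel \<and>
     (\<exists>B. compact B \<and> set_inv B = B \<and> 0 \<in> interior B \<and>
          (SUP x. emeasure \<nu> (rtrans B x)) < \<infinity>)"

end

theory Submission
  imports Defs
begin

text \<open>Each of the three boundaries of \<open>A\<close> lies in a thick boundary
\<open>\<partial>\<^sub>M A = M\<^sup>-\<^sup>1A \<inter> M\<^sup>-\<^sup>1A\<^sup>c\<close> for a compact \<open>M\<close> depending only on \<open>K\<close> (and, for \<open>\<partial>\<^sup>K\<close>,
on a compact unit neighbourhood \<open>W\<close>, since \<open>closure S \<subseteq> W\<^sup>-\<^sup>1S\<close>), and
\<open>L \<partial>\<^sub>M A \<subseteq> \<partial>\<^bsub>ML\<^sup>-\<^sup>1\<^esub> A\<close>.  So it suffices to bound \<open>\<nu>(Ss)\<close> when \<open>QS \<subseteq> D\<close>, where \<open>Q\<close>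
is a compact unit neighbourhood with \<open>\<nu>(Qx) \<le> C\<close> for all \<open>x\<close>.  Choose an open unit
neighbourhood \<open>V\<close> with \<open>V\<^sup>-\<^sup>1V \<subseteq> Q\<close>.  A maximal set \<open>F \<subseteq> Ss\<close> with pairwise disjoint
translates \<open>Vy\<close> has at most \<open>m(D)/m(V)\<close> elements, because these translates lie in \<open>Ds\<close>
and \<open>m\<close> is right invariant; by maximality the translates \<open>Qy\<close>, \<open>y \<in> F\<close>, cover \<open>Ss\<close>.
Hence \<open>\<nu>(Ss) \<le> C m(D)/m(V)\<close> uniformly in \<open>s\<close>, and with \<open>D = \<partial>\<^bsub>M'\<^esub>A\<^sub>i\<close> the Foelner
property makes this \<open>o(m(A\<^sub>i))\<close>.\<close>

section \<open>Products, inverses and right translates of sets\<close>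

lemma mem_set_prod: "x \<in> set_prod K A \<longleftrightarrow> (\<exists>k\<in>K. \<exists>a\<in>A. x = k + a)"
  unfolding set_prod_def by blast

lemma mem_set_inv: "x \<in> set_inv K \<longleftrightarrow> - x \<in> (K::'g::group_add set)"
  unfolding set_inv_def by (metis image_iff minus_minus)

lemma mem_rtrans: "x \<in> rtrans A s \<longleftrightarrow> x - s \<in> (A::'g::group_add set)"
proof
  assume "x \<in> rtrans A s"
  then obtain a where "a \<in> A" "x = a + s" unfolding rtrans_def by blast
  then show "x - s \<in> A" by simp
next
  assume "x - s \<in> A"
  then show "x \<in> rtrans A s" unfolding rtrans_def by (rule rev_image_eqI) simp
qed

lemma mem_set_prodI: "k \<in> K \<Longrightarrow> a \<in> A \<Longrightarrow> k + a \<in> set_prod K A"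
  unfolding set_prod_def by blast

lemma subset_set_prod: "0 \<in> K \<Longrightarrow> A \<subseteq> set_prod K (A::'g::monoid_add set)"
  using mem_set_prodI[of 0 K] by fastforce

lemma set_prod_assoc:
  "set_prod P (set_prod Q S) = set_prod (set_prod P Q) (S::'g::semigroup_add set)"
proof (intro set_eqI iffI)
  fix x assume "x \<in> set_prod P (set_prod Q S)"
  then obtain p q s where "p \<in> P" "q \<in> Q" "s \<in> S" "x = (p + q) + s"
    by (auto simp: mem_set_prod add.assoc)
  then show "x \<in> set_prod (set_prod P Q) S" by (simp add: mem_set_prodI)
next
  fix x assume "x \<in> set_prod (set_prod P Q) S"
  then obtain p q s where "p \<in> P" "q \<in> Q" "s \<in> S" "x = p + (q + s)"
    by (auto simp: mem_set_prod add.assoc)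
  then show "x \<in> set_prod P (set_prod Q S)" by (simp add: mem_set_prodI)
qed

lemma set_prod_mono: "P \<subseteq> P' \<Longrightarrow> S \<subseteq> S' \<Longrightarrow> set_prod P S \<subseteq> set_prod P' S'"
  unfolding set_prod_def by blast

lemma set_prod_nonempty: "P \<noteq> {} \<Longrightarrow> S \<noteq> {} \<Longrightarrow> set_prod P S \<noteq> {}"
  unfolding set_prod_def by blast

lemma set_prod_rtrans: "set_prod P (rtrans S s) = rtrans (set_prod P S) (s::'g::group_add)"
proof (intro set_eqI iffI)
  fix x assume "x \<in> set_prod P (rtrans S s)"
  then obtain p a where "p \<in> P" "a - s \<in> S" "x - s = p + (a - s)"
    by (auto simp: mem_set_prod mem_rtrans add_diff_eq)
  then show "x \<in> rtrans (set_prod P S) s"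
    unfolding mem_set_prod mem_rtrans by blast
next
  fix x assume "x \<in> rtrans (set_prod P S) s"
  then obtain p a where "p \<in> P" "a \<in> S" "x - s = p + a"
    by (auto simp: mem_set_prod mem_rtrans)
  then have "x = p + (a + s)" "(a + s) - s \<in> S"
    by (simp_all add: diff_eq_eq add.assoc)
  with \<open>p \<in> P\<close> show "x \<in> set_prod P (rtrans S s)"
    unfolding mem_set_prod by (intro bexI[of _ p] bexI[of _ "a + s"]) (simp_all add: mem_rtrans)
qed

lemma rtrans_mono: "S \<subseteq> S' \<Longrightarrow> rtrans S s \<subseteq> rtrans S' s"
  unfolding rtrans_def by blast

lemma set_inv_set_inv [simp]: "set_inv (set_inv (K::'g::group_add set)) = K"
  unfolding set_inv_def by (simp add: image_image)

lemma set_inv_empty_iff [simp]: "set_inv K = {} \<longleftrightarrow> K = {}"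
  unfolding set_inv_def by simp

lemma set_inv_insert: "set_inv (insert x K) = insert (- x) (set_inv K)"
  unfolding set_inv_def by simp

lemma set_inv_Un: "set_inv (K \<union> L) = set_inv K \<union> set_inv L"
  unfolding set_inv_def by (rule image_Un)

lemma set_inv_set_prod:
  "set_inv (set_prod P Q) = set_prod (set_inv Q) (set_inv (P::'g::group_add set))"
proof (intro set_eqI iffI)
  fix x assume "x \<in> set_inv (set_prod P Q)"
  then obtain p q where "p \<in> P" "q \<in> Q" "- x = p + q"
    by (auto simp: mem_set_prod mem_set_inv)
  then have "x = - (p + q)" by (metis minus_minus)
  then have "x = - q + - p" by (simp add: minus_add)
  with \<open>p \<in> P\<close> \<open>q \<in> Q\<close> show "x \<in> set_prod (set_inv Q) (set_inv P)"
    unfolding mem_set_prod by (intro bexI[of _ "- q"] bexI[of _ "- p"]) (simp_all add: mem_set_inv)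
next
  fix x assume "x \<in> set_prod (set_inv Q) (set_inv P)"
  then obtain p q where "p \<in> P" "q \<in> Q" "x = - q + - p"
    by (auto simp: mem_set_prod mem_set_inv)
  then have "- x = p + q" by (simp add: minus_add)
  with \<open>p \<in> P\<close> \<open>q \<in> Q\<close> show "x \<in> set_inv (set_prod P Q)"
    unfolding mem_set_inv mem_set_prod by blast
qed

lemma rtrans_eq_vimage: "rtrans S k = (\<lambda>y. y - k) -` (S::'g::group_add set)"
  by (auto simp: mem_rtrans)

lemma rtrans_Int_nonempty_imp_mem:
  fixes V :: "'g::group_add set"
  assumes "rtrans V x \<inter> rtrans V y \<noteq> {}"
  shows "x \<in> rtrans (set_prod (set_inv V) V) y"
proof -
  obtain v v' where "v \<in> V" "v' \<in> V" "v + x = v' + y"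
    using assms unfolding rtrans_def by blast
  then have "x = - v + (v' + y)"
    by (metis minus_add_cancel)
  then have "x - y = - v + v'" by (simp add: diff_eq_eq add.assoc)
  with \<open>v \<in> V\<close> \<open>v' \<in> V\<close> show ?thesis
    unfolding mem_rtrans mem_set_prod by (intro bexI[of _ "- v"] bexI[of _ v']) (simp_all add: mem_set_inv)
qed

lemma open_rtrans: "open U \<Longrightarrow> open (rtrans U (k::'g::topological_group_add))"
  unfolding rtrans_eq_vimage
  by (rule open_vimage) (simp_all add: continuous_on_diff)

lemma borel_rtrans:
  fixes R :: "'g::topological_group_add set"
  assumes "R \<in> sets borel" shows "rtrans R k \<in> sets borel"
  unfolding rtrans_eq_vimage
  by (rule measurable_sets_borel[OF _ assms])
    (intro borel_measurable_continuous_onI continuous_on_diff continuous_on_id continuous_on_const)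

lemma open_set_prod:
  fixes U :: "'g::topological_group_add set"
  assumes "open U" shows "open (set_prod K U)"
proof -
  have "x \<in> set_prod K U \<longleftrightarrow> (\<exists>k\<in>K. - k + x \<in> U)" for x
  proof
    assume "x \<in> set_prod K U"
    then obtain k u where "k \<in> K" "u \<in> U" "x = k + u" by (auto simp: mem_set_prod)
    then show "\<exists>k\<in>K. - k + x \<in> U" by (intro bexI[of _ k]) simp_all
  next
    assume "\<exists>k\<in>K. - k + x \<in> U"
    then obtain k where "k \<in> K" "- k + x \<in> U" by blast
    then have "k + (- k + x) \<in> set_prod K U" by (rule mem_set_prodI)
    then show "x \<in> set_prod K U" by simp
  qed
  then have "set_prod K U = (\<Union>k\<in>K. (\<lambda>y. - k + y) -` U)" by auto
  moreover have "open ((\<lambda>y. - k + y) -` U)" for k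
    using assms by (rule open_vimage) (simp add: continuous_on_add)
  ultimately show ?thesis by auto
qed

lemma compact_set_prod:
  fixes K A :: "'g::topological_group_add set"
  assumes "compact K" "compact A" shows "compact (set_prod K A)"
proof -
  have "set_prod K A = (\<lambda>p. fst p + snd p) ` (K \<times> A)"
    unfolding set_prod_def by force
  moreover have "continuous_on (K \<times> A) (\<lambda>p. fst p + snd p)"
    by (intro continuous_intros)
  ultimately show ?thesis
    by (simp add: compact_continuous_image compact_Times assms)
qed

lemma compact_set_inv: "compact K \<Longrightarrow> compact (set_inv (K::'g::topological_group_add set))"
  unfolding set_inv_def by (intro compact_continuous_image continuous_intros)

lemma closure_subset_set_prod:
  fixes W S :: "'g::topological_group_add set"
  assumes "0 \<in> interior W"
  shows "closure S \<subseteq> set_prod (set_inv W) S"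
proof
  fix x assume "x \<in> closure S"
  moreover have "open (rtrans (interior W) x)" by (simp add: open_rtrans)
  moreover have "x \<in> rtrans (interior W) x" using assms by (simp add: mem_rtrans)
  ultimately obtain s where "s \<in> S" "s \<in> rtrans (interior W) x"
    unfolding closure_iff_nhds_not_empty by blast
  then have "- (x - s) \<in> W" "s \<in> S" using interior_subset by (auto simp: mem_rtrans)
  then have "(x - s) + s \<in> set_prod (set_inv W) S"
    by (intro mem_set_prodI) (simp_all add: mem_set_inv)
  then show "x \<in> set_prod (set_inv W) S" by simp
qed

lemma open_nhd_inv_prod_subset:
  fixes W :: "'g::topological_group_add set"
  assumes "0 \<in> interior W"
  obtains V where "open V" "0 \<in> V" "set_prod (set_inv V) V \<subseteq> W"
proof -
  let ?f = "\<lambda>p::'g \<times> 'g. - fst p + snd p"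
  have "continuous_on UNIV ?f" by (intro continuous_intros)
  then have "open (?f -` interior W)" by (intro open_vimage) simp_all
  moreover have "(0, 0) \<in> ?f -` interior W" using assms by simp
  ultimately obtain U1 U2 where U: "open U1" "open U2" "(0, 0) \<in> U1 \<times> U2"
    "U1 \<times> U2 \<subseteq> ?f -` interior W"
    by (rule open_prod_elim)
  have "set_prod (set_inv (U1 \<inter> U2)) (U1 \<inter> U2) \<subseteq> W"
  proof
    fix z assume "z \<in> set_prod (set_inv (U1 \<inter> U2)) (U1 \<inter> U2)"
    then obtain k b where "- k \<in> U1" "b \<in> U2" "z = k + b"
      by (auto simp: mem_set_prod mem_set_inv)
    then have "?f (- k, b) \<in> interior W" "?f (- k, b) = z" using U(4) by auto
    then show "z \<in> W" using interior_subset by auto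
  qed
  with U show ?thesis by (intro that[of "U1 \<inter> U2"]) auto
qed

section \<open>Boundaries inside thick boundaries\<close>

lemma bd_lower_borel:
  fixes K A :: "'g::{topological_group_add, t2_space} set"
  assumes "compact K" "compact A"
  shows "bd_lower K A \<in> sets borel"
proof -
  have "closed (set_prod (set_inv K) A)"
    by (intro compact_imp_closed compact_set_prod compact_set_inv assms)
  moreover have "open (set_prod (set_inv K) (- A))"
    by (intro open_set_prod) (simp add: open_Compl compact_imp_closed assms)
  ultimately show ?thesis unfolding bd_lower_def by (simp add: borel_closed borel_open sets.Int)
qed

lemma bd_lower_subset: "bd_lower K A \<subseteq> set_prod (set_inv K) A"
  unfolding bd_lower_def by blast

lemma set_prod_bd_lower_subset:
  fixes K L A :: "'g::group_add set"
  shows "set_prod L (bd_lower K A) \<subseteq> bd_lower (set_prod K (set_inv L)) A"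
proof -
  have eq: "set_prod L (set_prod (set_inv K) S) = set_prod (set_inv (set_prod K (set_inv L))) S" for S
    by (simp add: set_inv_set_prod set_prod_assoc)
  have "set_prod L (bd_lower K A)
      \<subseteq> set_prod L (set_prod (set_inv K) A) \<inter> set_prod L (set_prod (set_inv K) (- A))"
    unfolding bd_lower_def by (intro Int_greatest set_prod_mono) auto
  then show ?thesis unfolding bd_lower_def eq .
qed

lemma bd_delta_subset_bd_lower:
  fixes K A :: "'g::group_add set"
  assumes "K \<noteq> {}"
  shows "bd_delta K A \<subseteq> bd_lower (insert 0 (set_inv K)) A"
proof
  fix x assume x: "x \<in> bd_delta K A"
  obtain k where "k \<in> K" using assms by blast
  have "x \<in> set_prod (insert 0 K) A \<inter> set_prod (insert 0 K) (- A)"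
  proof (cases "x \<in> A")
    case True
    have "- k + x \<notin> A"
    proof
      assume "- k + x \<in> A"
      then have "k + (- k + x) \<in> set_prod K A" using \<open>k \<in> K\<close> by (intro mem_set_prodI)
      then show False using x True by (simp add: bd_delta_def)
    qed
    then have "k + (- k + x) \<in> set_prod (insert 0 K) (- A)"
      using \<open>k \<in> K\<close> by (intro mem_set_prodI) simp_all
    with True show ?thesis using subset_set_prod[of "insert 0 K" A] by auto
  next
    case False
    then have "x \<in> set_prod (insert 0 K) A"
      using x set_prod_mono[of K "insert 0 K" A A] by (auto simp: bd_delta_def)
    with False show ?thesis using subset_set_prod[of "insert 0 K" "- A"] by auto
  qed
  then show "x \<in> bd_lower (insert 0 (set_inv K)) A"
    by (simp add: bd_lower_def set_inv_insert)
qed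

lemma bd_upper_subset_bd_lower:
  fixes K A W :: "'g::topological_group_add set"
  assumes "0 \<in> interior W"
  shows "bd_upper K A \<subseteq> bd_lower (insert 0 (set_inv K \<union> set_prod W K \<union> W)) A"
proof -
  let ?M = "insert 0 (K \<union> set_prod (set_inv K) (set_inv W) \<union> set_inv W)"
  have cl: "closure (- A) \<subseteq> set_prod (set_inv W) (- A)"
    by (rule closure_subset_set_prod[OF assms])
  have "A \<subseteq> set_prod ?M A" by (rule subset_set_prod) simp
  moreover have "set_prod K A \<subseteq> set_prod ?M A" by (rule set_prod_mono) auto
  moreover have "closure (- A) \<subseteq> set_prod ?M (- A)"
    using cl set_prod_mono[of "set_inv W" ?M "- A" "- A"] by auto
  moreover have "set_prod (set_inv K) (closure (- A)) \<subseteq> set_prod ?M (- A)"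
    using set_prod_mono[OF order_refl cl, of "set_inv K"]
      set_prod_mono[of "set_prod (set_inv K) (set_inv W)" ?M "- A" "- A"]
    by (auto simp: set_prod_assoc)
  ultimately have "bd_upper K A \<subseteq> set_prod ?M A \<inter> set_prod ?M (- A)"
    unfolding bd_upper_def by blast
  then show ?thesis
    by (simp add: bd_lower_def set_inv_insert set_inv_Un set_inv_set_prod)
qed

lemma rtrans_subset_set_prod: "x \<in> E \<Longrightarrow> rtrans V x \<subseteq> set_prod V E"
  unfolding rtrans_def by (auto intro: mem_set_prodI)

section \<open>A packing bound for upper translation bounded measures\<close>

lemma haar_measureD:
  assumes "haar_measure m"
  shows "sets m = sets borel"
    and "compact K \<Longrightarrow> emeasure m K < \<infinity>"
    and "open U \<Longrightarrow> U \<noteq> {} \<Longrightarrow> 0 < emeasure m U"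
proof -
  note h = assms[unfolded haar_measure_def]
  show "sets m = sets borel" using h by (rule conjunct1)
  show "compact K \<Longrightarrow> emeasure m K < \<infinity>"
    using conjunct1[OF conjunct2[OF conjunct2[OF h]]] by blast
  show "open U \<Longrightarrow> U \<noteq> {} \<Longrightarrow> 0 < emeasure m U"
    using conjunct1[OF conjunct2[OF conjunct2[OF conjunct2[OF h]]]] by blast
qed

lemma unimodularD:
  "unimodular m \<Longrightarrow> R \<in> sets borel \<Longrightarrow> emeasure m (rtrans R x) = emeasure m R"
  unfolding unimodular_def rtrans_def by simp

lemma upper_translation_boundedE:
  assumes "upper_translation_bounded \<nu>"
  obtains B C where "compact B" "0 \<in> interior B" "0 \<le> C"
    "\<And>x. emeasure \<nu> (rtrans B x) \<le> ennreal C"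
proof -
  obtain B where B: "compact B" "0 \<in> interior B"
    and fin: "(SUP x. emeasure \<nu> (rtrans B x)) < \<infinity>"
    using assms unfolding upper_translation_bounded_def by blast
  have "emeasure \<nu> (rtrans B x) \<le> (SUP x. emeasure \<nu> (rtrans B x))" for x
    by (rule SUP_upper) simp
  also have "\<dots> = ennreal (enn2real (SUP x. emeasure \<nu> (rtrans B x)))"
    using fin by (simp add: less_top[symmetric])
  finally show ?thesis
    using B by (intro that[where C = "enn2real (SUP x. emeasure \<nu> (rtrans B x))"]) auto
qed

lemma outer_meas_le_emeasure: "U \<in> sets \<nu> \<Longrightarrow> E \<subseteq> U \<Longrightarrow> outer_meas \<nu> E \<le> emeasure \<nu> U"
  unfolding outer_meas_def by (rule INF_lower) simp

lemma card_mult_le_emeasure_disjoint: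
  assumes "finite F" "disjoint_family_on X F" "X ` F \<subseteq> sets M"
    and "\<And>x. x \<in> F \<Longrightarrow> emeasure M (X x) = c"
    and "(\<Union>x\<in>F. X x) \<subseteq> R" "R \<in> sets M"
  shows "of_nat (card F) * c \<le> emeasure M R"
proof -
  have "of_nat (card F) * c = (\<Sum>x\<in>F. c)" by simp
  also have "\<dots> = (\<Sum>x\<in>F. emeasure M (X x))" using assms(4) by (intro sum.cong) simp_all
  also have "\<dots> = emeasure M (\<Union>x\<in>F. X x)" by (rule sum_emeasure[OF assms(3,2,1)])
  also have "\<dots> \<le> emeasure M R" by (rule emeasure_mono[OF assms(5,6)])
  finally show ?thesis .
qed

lemma maximal_finite_disjoint_subfamily:
  fixes X :: "'a \<Rightarrow> 'b set"
  assumes bounded: "\<And>F. finite F \<Longrightarrow> F \<subseteq> E \<Longrightarrow> disjoint_family_on X F \<Longrightarrow> card F \<le> n"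
    and nonempty: "\<And>x. x \<in> E \<Longrightarrow> X x \<noteq> {}"
  obtains F where "finite F" "F \<subseteq> E" "disjoint_family_on X F"
    "\<forall>x\<in>E. \<exists>y\<in>F. X x \<inter> X y \<noteq> {}"
proof -
  let ?P = "\<lambda>F. finite F \<and> F \<subseteq> E \<and> disjoint_family_on X F"
  have "?P {}" by (simp add: disjoint_family_on_def)
  moreover have "\<forall>F. ?P F \<longrightarrow> card F < Suc n" using bounded by (simp add: le_imp_less_Suc)
  ultimately obtain F where F: "?P F" and max: "\<And>G. ?P G \<Longrightarrow> card G \<le> card F"
    using Lattices_Big.ex_has_greatest_nat[of ?P "{}" card "Suc n"] by blast
  have "\<exists>y\<in>F. X x \<inter> X y \<noteq> {}" if "x \<in> E" for x
  proof (rule ccontr)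
    assume disj: "\<not> (\<exists>y\<in>F. X x \<inter> X y \<noteq> {})"
    then have "x \<notin> F" using nonempty[OF that] by auto
    then have "?P (insert x F)" using F that disj by (auto simp: disjoint_family_on_insert)
    then have "card (insert x F) \<le> card F" by (rule max)
    with F \<open>x \<notin> F\<close> show False by simp
  qed
  with F show ?thesis by (intro that) auto
qed

lemma outer_meas_le_by_packing:
  fixes m \<nu> :: "'g::group_add measure" and C :: real
  assumes V_sets: "\<And>x. rtrans V x \<in> sets m"
    and V_inv: "\<And>x. emeasure m (rtrans V x) = emeasure m V"
    and V_pos: "0 < emeasure m V" and V_fin: "emeasure m V < \<infinity>"
    and VB: "set_prod (set_inv V) V \<subseteq> B"
    and B_sets: "\<And>y. rtrans B y \<in> sets \<nu>"
    and B_bound: "\<And>y. emeasure \<nu> (rtrans B y) \<le> ennreal C" and "0 \<le> C"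
    and R_sets: "R \<in> sets m" and R_fin: "emeasure m R < \<infinity>"
    and VE: "set_prod V E \<subseteq> R"
  shows "outer_meas \<nu> E \<le> ennreal (C / measure m V * measure m R)"
proof -
  have V_meas: "emeasure m V = ennreal (measure m V)"
    and R_meas: "emeasure m R = ennreal (measure m R)"
    using V_fin R_fin by (simp_all add: emeasure_eq_ennreal_measure)
  have "0 < measure m V" using V_pos V_fin by (simp add: measure_def enn2real_positive_iff)
  have card_le: "real (card F) \<le> measure m R / measure m V"
    if F: "finite F" "F \<subseteq> E" "disjoint_family_on (rtrans V) F" for F
  proof -
    have "(\<Union>x\<in>F. rtrans V x) \<subseteq> R"
      using F(2) VE rtrans_subset_set_prod[of _ E V] by blast
    then have "of_nat (card F) * emeasure m V \<le> emeasure m R"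
      using F V_sets V_inv R_sets by (intro card_mult_le_emeasure_disjoint) auto
    then have "ennreal (real (card F) * measure m V) \<le> ennreal (measure m R)"
      unfolding V_meas R_meas by (simp add: ennreal_mult ennreal_of_nat_eq_real_of_nat)
    then have "real (card F) * measure m V \<le> measure m R" by simp
    then show ?thesis using \<open>0 < measure m V\<close> by (simp add: le_divide_eq)
  qed
  have bounded: "card F \<le> nat \<lceil>measure m R / measure m V\<rceil>"
    if "finite F" "F \<subseteq> E" "disjoint_family_on (rtrans V) F" for F
    using card_le[OF that] by linarith
  have nonempty: "rtrans V x \<noteq> {}" if "x \<in> E" for x
    using V_pos by (auto simp: rtrans_def)
  obtain F where F: "finite F" "F \<subseteq> E" "disjoint_family_on (rtrans V) F"
    and maximal: "\<forall>x\<in>E. \<exists>y\<in>F. rtrans V x \<inter> rtrans V y \<noteq> {}"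
    by (rule maximal_finite_disjoint_subfamily[OF bounded nonempty])
  have "E \<subseteq> (\<Union>y\<in>F. rtrans B y)"
  proof
    fix x assume "x \<in> E"
    then obtain y where "y \<in> F" "rtrans V x \<inter> rtrans V y \<noteq> {}" using maximal by blast
    then have "x \<in> rtrans B y" using rtrans_Int_nonempty_imp_mem rtrans_mono[OF VB] by blast
    with \<open>y \<in> F\<close> show "x \<in> (\<Union>y\<in>F. rtrans B y)" by blast
  qed
  then have "outer_meas \<nu> E \<le> emeasure \<nu> (\<Union>y\<in>F. rtrans B y)"
    using F(1) B_sets by (intro outer_meas_le_emeasure) auto
  also have "\<dots> \<le> (\<Sum>y\<in>F. emeasure \<nu> (rtrans B y))"
    using F(1) B_sets by (intro emeasure_subadditive_finite) auto
  also have "\<dots> \<le> (\<Sum>y\<in>F. ennreal C)" using B_bound by (intro sum_mono)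
  also have "\<dots> = ennreal (real (card F) * C)"
    using \<open>0 \<le> C\<close> by (simp add: ennreal_mult ennreal_of_nat_eq_real_of_nat)
  also have "\<dots> \<le> ennreal (C / measure m V * measure m R)"
  proof (rule ennreal_leI)
    have "real (card F) * C = C * real (card F)" by (rule mult.commute)
    also have "\<dots> \<le> C * (measure m R / measure m V)"
      using card_le[OF F] \<open>0 \<le> C\<close> by (rule mult_left_mono)
    also have "\<dots> = C / measure m V * measure m R" by simp
    finally show "real (card F) * C \<le> C / measure m V * measure m R" .
  qed
  finally show ?thesis .
qed

lemma upper_translation_bounded_outer_meas_le:
  fixes m \<nu> :: "'g::{topological_group_add, t2_space} measure"
  assumes haar: "haar_measure m" and unimod: "unimodular m"
    and utb: "upper_translation_bounded \<nu>"
  obtains Q :: "'g set" and c :: real where "compact Q" "Q \<noteq> {}" "0 \<le> c"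
    "\<And>S D s. set_prod Q S \<subseteq> D \<Longrightarrow> D \<in> sets borel \<Longrightarrow> emeasure m D < \<infinity> \<Longrightarrow>
       outer_meas \<nu> (rtrans S s) \<le> ennreal (c * measure m D)"
proof -
  obtain B C where B: "compact B" "0 \<in> interior B"
    and C: "0 \<le> C" "\<And>x. emeasure \<nu> (rtrans B x) \<le> ennreal C"
    using upper_translation_boundedE[OF utb] by metis
  have sets_\<nu>: "sets \<nu> = sets borel"
    using utb by (simp add: upper_translation_bounded_def)
  have sets_m: "sets m = sets borel" by (rule haar_measureD(1)[OF haar])
  obtain V where V: "open V" "0 \<in> V" "set_prod (set_inv V) V \<subseteq> B"
    using B(2) by (rule open_nhd_inv_prod_subset)
  have "V \<subseteq> B"
    using V(2,3) subset_set_prod[of "set_inv V" V] by (auto simp: mem_set_inv)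
  have B_borel: "B \<in> sets borel" using B(1) by (simp add: borel_closed compact_imp_closed)
  have V_borel: "V \<in> sets borel" using V(1) by (simp add: borel_open)
  have V_pos: "0 < emeasure m V" using haar_measureD(3)[OF haar V(1)] V(2) by blast
  have "emeasure m V \<le> emeasure m B" using \<open>V \<subseteq> B\<close> B_borel sets_m by (intro emeasure_mono) simp_all
  then have V_fin: "emeasure m V < \<infinity>" using haar_measureD(2)[OF haar B(1)] by simp
  have bound: "outer_meas \<nu> (rtrans S s) \<le> ennreal (C / measure m V * measure m D)"
    if QS: "set_prod B S \<subseteq> D" and D: "D \<in> sets borel" "emeasure m D < \<infinity>" for S D s
  proof -
    have D_inv: "emeasure m (rtrans D s) = emeasure m D" by (rule unimodularD[OF unimod D(1)])
    have "set_prod V (rtrans S s) \<subseteq> rtrans D s"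
      unfolding set_prod_rtrans using set_prod_mono[OF \<open>V \<subseteq> B\<close> order_refl] QS
      by (intro rtrans_mono) blast
    moreover have "rtrans V x \<in> sets m" "rtrans B x \<in> sets \<nu>" "rtrans D s \<in> sets m" for x
      using V_borel B_borel D(1) sets_m sets_\<nu> by (simp_all add: borel_rtrans)
    moreover have "emeasure m (rtrans V x) = emeasure m V" for x
      by (rule unimodularD[OF unimod V_borel])
    ultimately have "outer_meas \<nu> (rtrans S s) \<le> ennreal (C / measure m V * measure m (rtrans D s))"
      using V_pos V_fin V(3) C D(2) D_inv by (intro outer_meas_le_by_packing) simp_all
    then show ?thesis using D_inv by (simp add: measure_def)
  qed
  have "B \<noteq> {}" using B(2) interior_subset by blast
  moreover have "0 \<le> C / measure m V" using C(1) by simp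
  ultimately show ?thesis by (rule that[OF B(1) _ _ bound])
qed

section \<open>Limits along strong Foelner nets\<close>

lemma tendsto_SUP_outer_meas_translates_zero:
  fixes m \<nu> :: "'g::{topological_group_add, t2_space} measure"
    and A S :: "'i::order \<Rightarrow> 'g set"
  assumes haar: "haar_measure m" and unimod: "unimodular m"
    and foelner: "strong_foelner m A" and utb: "upper_translation_bounded \<nu>"
    and N: "compact N" "N \<noteq> {}" and S: "\<And>i. S i \<subseteq> bd_lower N (A i)"
  shows "((\<lambda>i. SUP s. outer_meas \<nu> (rtrans (S i) s) / emeasure m (A i)) \<longlongrightarrow> 0) at_top"
proof -
  obtain Q c where Q: "compact Q" "Q \<noteq> {}" and "0 \<le> c"
    and bound: "\<And>S D s. set_prod Q S \<subseteq> D \<Longrightarrow> D \<in> sets borel \<Longrightarrow> emeasure m D < \<infinity> \<Longrightarrow>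
       outer_meas \<nu> (rtrans S s) \<le> ennreal (c * measure m D)"
    using upper_translation_bounded_outer_meas_le[OF haar unimod utb] by metis
  define N' where "N' = set_prod N (set_inv Q)"
  have N': "compact N'" "N' \<noteq> {}"
    unfolding N'_def using N Q
    by (simp_all add: compact_set_prod compact_set_inv set_prod_nonempty)
  define D where "D i = bd_lower N' (A i)" for i
  have A: "compact (A i)" "0 < emeasure m (A i)" for i
    using conjunct1[OF foelner[unfolded strong_foelner_def]] by simp_all
  have A_meas: "emeasure m (A i) = ennreal (measure m (A i))" for i
    using haar_measureD(2)[OF haar A(1)[of i]] by (simp add: emeasure_eq_ennreal_measure)
  have A_pos: "0 < measure m (A i)" for i
    using A(2)[of i] haar_measureD(2)[OF haar A(1)[of i]] by (simp add: measure_def enn2real_positive_iff)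
  have D_borel: "D i \<in> sets borel" for i
    unfolding D_def using N'(1) A(1) by (rule bd_lower_borel)
  have D_fin: "emeasure m (D i) < \<infinity>" for i
  proof -
    have "compact (set_prod (set_inv N') (A i))"
      using N'(1) A(1) by (intro compact_set_prod compact_set_inv)
    moreover have "emeasure m (D i) \<le> emeasure m (set_prod (set_inv N') (A i))"
      using calculation haar_measureD(1)[OF haar] unfolding D_def
      by (intro emeasure_mono bd_lower_subset) (simp add: borel_closed compact_imp_closed)
    ultimately show ?thesis using haar_measureD(2)[OF haar] by (meson order.strict_trans1)
  qed
  have QS: "set_prod Q (S i) \<subseteq> D i" for i
    unfolding D_def N'_def using set_prod_mono[OF order_refl S] set_prod_bd_lower_subset by blast
  have le: "(SUP s. outer_meas \<nu> (rtrans (S i) s) / emeasure m (A i))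
      \<le> ennreal (c * (measure m (D i) / measure m (A i)))" for i
  proof (rule SUP_least)
    fix s
    have "outer_meas \<nu> (rtrans (S i) s) / emeasure m (A i)
        \<le> ennreal (c * measure m (D i)) / ennreal (measure m (A i))"
      unfolding A_meas[symmetric] using QS D_borel D_fin by (intro divide_right_mono_ennreal bound)
    also have "\<dots> = ennreal (c * (measure m (D i) / measure m (A i)))"
      using \<open>0 \<le> c\<close> A_pos by (simp add: divide_ennreal)
    finally show "outer_meas \<nu> (rtrans (S i) s) / emeasure m (A i)
        \<le> ennreal (c * (measure m (D i) / measure m (A i)))" .
  qed
  have "((\<lambda>i. measure m (D i) / measure m (A i)) \<longlongrightarrow> 0) at_top"
    using foelner N' unfolding strong_foelner_def D_def by blast
  from tendsto_mult[OF tendsto_const[of c] this]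
  have "((\<lambda>i. ennreal (c * (measure m (D i) / measure m (A i)))) \<longlongrightarrow> ennreal 0) at_top"
    by (intro tendsto_ennrealI) simp
  then have bound_lim: "((\<lambda>i. ennreal (c * (measure m (D i) / measure m (A i)))) \<longlongrightarrow> 0) at_top"
    by simp
  show ?thesis
    by (rule tendsto_sandwich[OF _ _ tendsto_const bound_lim]) (simp, intro always_eventually allI le)
qed

lemma tendsto_SUP_outer_meas_set_prod_translates_zero:
  fixes m \<nu> :: "'g::{topological_group_add, t2_space} measure"
    and A Z :: "'i::order \<Rightarrow> 'g set"
  assumes haar: "haar_measure m" and unimod: "unimodular m"
    and foelner: "strong_foelner m A" and utb: "upper_translation_bounded \<nu>"
    and "compact N" "N \<noteq> {}" "compact L" "L \<noteq> {}" and Z: "\<And>i. Z i \<subseteq> bd_lower N (A i)"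
  shows "((\<lambda>i. SUP s. outer_meas \<nu> (rtrans (set_prod L (Z i)) s) / emeasure m (A i)) \<longlongrightarrow> 0) at_top"
proof (rule tendsto_SUP_outer_meas_translates_zero[OF haar unimod foelner utb,
      where N = "set_prod N (set_inv L)"])
  show "compact (set_prod N (set_inv L))" "set_prod N (set_inv L) \<noteq> {}"
    using assms by (simp_all add: compact_set_prod compact_set_inv set_prod_nonempty)
  show "set_prod L (Z i) \<subseteq> bd_lower (set_prod N (set_inv L)) (A i)" for i
    using set_prod_mono[OF order_refl Z] set_prod_bd_lower_subset by blast
qed

lemma eventually_at_top_directed:
  assumes directed: "\<forall>a b :: 'i::order. \<exists>c. a \<le> c \<and> b \<le> c"
  shows "eventually P (at_top :: 'i filter) \<longleftrightarrow> (\<exists>k. \<forall>n\<ge>k. P n)"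
proof -
  have "\<exists>c\<in>UNIV. principal {c..} \<le> inf (principal {a..}) (principal {b..})" for a b :: 'i
  proof -
    obtain c where "a \<le> c" "b \<le> c" using directed by blast
    then have "{c..} \<subseteq> {a..} \<inter> {b..}" by auto
    then show ?thesis by (auto simp: inf_principal)
  qed
  then show ?thesis
    unfolding at_top_def by (subst eventually_INF_base) (auto simp: eventually_principal)
qed

lemma directed_at_top_neq_bot:
  assumes "\<forall>a b :: 'i::order. \<exists>c. a \<le> c \<and> b \<le> c"
  shows "(at_top :: 'i filter) \<noteq> bot"
  unfolding eventually_False[symmetric] eventually_at_top_directed[OF assms] by auto

lemma SUP_Lim_eq_0:
  fixes g :: "'a \<Rightarrow> 'b \<Rightarrow> ennreal"
  assumes "F \<noteq> bot" and "\<And>k. k \<in> I \<Longrightarrow> (g k \<longlongrightarrow> 0) F"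
  shows "(SUP k\<in>I. Lim F (g k)) = 0"
proof -
  have "Lim F (g k) = 0" if "k \<in> I" for k
    using assms(1) assms(2)[OF that] by (rule tendsto_Lim)
  then show ?thesis by (simp add: SUP_bot_conv bot_ennreal[symmetric])
qed

theorem lemma5p10:
  fixes m \<nu> :: "'g::{topological_group_add, t2_space} measure"
    and A :: "'i::order \<Rightarrow> 'g set"
  assumes lc: "locally_compact_space (euclidean :: 'g topology)"
    and haar: "haar_measure m"
    and unimod: "unimodular m"
    and amen: "amenable m"
    and directed: "\<forall>a b :: 'i. \<exists>c. a \<le> c \<and> b \<le> c"
    and foelner: "strong_foelner m A"
    and utb: "upper_translation_bounded \<nu>"
  shows
   "(\<forall>K L. compact K \<and> K \<noteq> {} \<and> compact L \<and> L \<noteq> {} \<longrightarrow>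
       (\<exists>l. ((\<lambda>i. SUP s. outer_meas \<nu> (rtrans (set_prod L (bd_delta K (A i))) s) / emeasure m (A i)) \<longlongrightarrow> l) at_top)) \<and>
    (SUP KL \<in> {(K, L). compact K \<and> K \<noteq> {} \<and> compact L \<and> L \<noteq> {}}.
       Lim at_top (\<lambda>i. SUP s. outer_meas \<nu> (rtrans (set_prod (snd KL) (bd_delta (fst KL) (A i))) s) / emeasure m (A i))) = 0 \<and>
    (\<forall>K L. compact K \<and> K \<noteq> {} \<and> compact L \<and> L \<noteq> {} \<longrightarrow>
       (\<exists>l. ((\<lambda>i. SUP s. outer_meas \<nu> (rtrans (set_prod L (bd_lower K (A i))) s) / emeasure m (A i)) \<longlongrightarrow> l) at_top)) \<and>
    (SUP KL \<in> {(K, L). compact K \<and> K \<noteq> {} \<and> compact L \<and> L \<noteq> {}}.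
       Lim at_top (\<lambda>i. SUP s. outer_meas \<nu> (rtrans (set_prod (snd KL) (bd_lower (fst KL) (A i))) s) / emeasure m (A i))) = 0 \<and>
    (\<forall>K L. compact K \<and> K \<noteq> {} \<and> compact L \<and> L \<noteq> {} \<longrightarrow>
       (\<exists>l. ((\<lambda>i. SUP s. outer_meas \<nu> (rtrans (set_prod L (bd_upper K (A i))) s) / emeasure m (A i)) \<longlongrightarrow> l) at_top)) \<and>
    (SUP KL \<in> {(K, L). compact K \<and> K \<noteq> {} \<and> compact L \<and> L \<noteq> {}}.
       Lim at_top (\<lambda>i. SUP s. outer_meas \<nu> (rtrans (set_prod (snd KL) (bd_upper (fst KL) (A i))) s) / emeasure m (A i))) = 0"
proof -
  have at_top_proper: "(at_top :: 'i filter) \<noteq> bot" by (rule directed_at_top_neq_bot[OF directed])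
  obtain W :: "'g set" where W: "compact W" "0 \<in> interior W"
    using utb unfolding upper_translation_bounded_def by blast
  note thick = tendsto_SUP_outer_meas_set_prod_translates_zero[OF haar unimod foelner utb]
  have delta: "((\<lambda>i. SUP s. outer_meas \<nu> (rtrans (set_prod L (bd_delta K (A i))) s) / emeasure m (A i)) \<longlongrightarrow> 0) at_top"
    if "compact K" "K \<noteq> {}" "compact L" "L \<noteq> {}" for K L
    using that bd_delta_subset_bd_lower[OF that(2)]
    by (intro thick[where N = "insert 0 (set_inv K)"]) (simp_all add: compact_set_inv)
  have lower: "((\<lambda>i. SUP s. outer_meas \<nu> (rtrans (set_prod L (bd_lower K (A i))) s) / emeasure m (A i)) \<longlongrightarrow> 0) at_top"
    if "compact K" "K \<noteq> {}" "compact L" "L \<noteq> {}" for K L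
    using that by (intro thick[where N = K]) simp_all
  have upper: "((\<lambda>i. SUP s. outer_meas \<nu> (rtrans (set_prod L (bd_upper K (A i))) s) / emeasure m (A i)) \<longlongrightarrow> 0) at_top"
    if "compact K" "K \<noteq> {}" "compact L" "L \<noteq> {}" for K L
    using that bd_upper_subset_bd_lower[OF W(2)] W(1)
    by (intro thick[where N = "insert 0 (set_inv K \<union> set_prod W K \<union> W)"])
      (simp_all add: compact_Un compact_set_inv compact_set_prod)
  show ?thesis
    by (intro conjI allI impI exI SUP_Lim_eq_0[OF at_top_proper]; auto intro: delta lower upper)
qed

end
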